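(* If $(A,W)$ is a $T_1$ Pratt comonoid and $A_0$ is a finite subset of $A$, then for every subset $y\subseteq A_0$ there exists $x\in W$ with $x\cap A_0=y$.
   Context: A Pratt comonoid is a pair $(A,W)$ where $A$ is a set and $W$ is a set of subsets of $A$ such that (i) $\emptyset\in W$ and $A\in W$; (ii) whenever $C\subseteq A\times A$ is such that for every $a\in A$ both the $a$-th row $\{b\mid (a,b)\in C\}$ and the $a$-th column $\{b\mid (b,a)\in C\}$ belong to $W$ (a crossword over $W$), the diagonal $\{b\mid (b,b)\in C\}$ also belongs to $W$. $(A,W)$ is $T_1$ if for all distinct $a,b\in A$ some member of $W$ contains $a$ but not $b$. *)

theory Defs
  imports Main
begin

definition crossword :: "'a set \<Rightarrow> 'a set set \<Rightarrow> ('a \<times> 'a) set \<Rightarrow> bool" where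
  "crossword A W C \<longleftrightarrow> C \<subseteq> A \<times> A \<and>
     (\<forall>a\<in>A. {b. (a, b) \<in> C} \<in> W \<and> {b. (b, a) \<in> C} \<in> W)"

definition pratt_comonoid :: "'a set \<Rightarrow> 'a set set \<Rightarrow> bool" where
  "pratt_comonoid A W \<longleftrightarrow>
     (\<forall>x\<in>W. x \<subseteq> A) \<and> {} \<in> W \<and> A \<in> W \<and>
     (\<forall>C. crossword A W C \<longrightarrow> {b. (b, b) \<in> C} \<in> W)"

definition T1_comonoid :: "'a set \<Rightarrow> 'a set set \<Rightarrow> bool" where
  "T1_comonoid A W \<longleftrightarrow>
     (\<forall>a\<in>A. \<forall>b\<in>A. a \<noteq> b \<longrightarrow> (\<exists>x\<in>W. a \<in> x \<and> b \<notin> x))"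

end

theory Submission
  imports Defs
begin

text \<open>The diagonal of the crossword \<open>u \<times> v\<close> is \<open>u \<inter> v\<close>, that of \<open>(u \<times> A) \<union> (A \<times> v)\<close>
  is \<open>u \<union> v\<close>; so \<open>W\<close> is a lattice of subsets of \<open>A\<close>. Given finitely many points of \<open>A\<close>,
  intersecting the sets provided by \<open>T\<^sub>1\<close> isolates each of them, and the union of the
  isolating sets of the points of \<open>y\<close> cuts out exactly \<open>y\<close>.\<close>

lemma pratt_comonoid_Int:
  assumes P: "pratt_comonoid A W" and u: "u \<in> W" and v: "v \<in> W"
  shows "u \<inter> v \<in> W"
proof -
  have sub: "u \<subseteq> A" "v \<subseteq> A" and empty: "{} \<in> W"
    using P u v unfolding pratt_comonoid_def by auto
  have "crossword A W (u \<times> v)"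
    unfolding crossword_def
  proof (intro conjI ballI)
    show "u \<times> v \<subseteq> A \<times> A" using sub by auto
  next
    fix a
    have "{b. (a, b) \<in> u \<times> v} = (if a \<in> u then v else {})" by auto
    then show "{b. (a, b) \<in> u \<times> v} \<in> W" using v empty by simp
    have "{b. (b, a) \<in> u \<times> v} = (if a \<in> v then u else {})" by auto
    then show "{b. (b, a) \<in> u \<times> v} \<in> W" using u empty by simp
  qed
  then have "{b. (b, b) \<in> u \<times> v} \<in> W" using P unfolding pratt_comonoid_def by blast
  then show ?thesis by (simp add: Int_def)
qed

lemma pratt_comonoid_Un:
  assumes P: "pratt_comonoid A W" and u: "u \<in> W" and v: "v \<in> W"
  shows "u \<union> v \<in> W"
proof -
  have sub: "u \<subseteq> A" "v \<subseteq> A" and univ: "A \<in> W"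
    using P u v unfolding pratt_comonoid_def by auto
  let ?C = "(u \<times> A) \<union> (A \<times> v)"
  have "crossword A W ?C"
    unfolding crossword_def
  proof (intro conjI ballI)
    show "?C \<subseteq> A \<times> A" using sub by auto
  next
    fix a assume "a \<in> A"
    then have "{b. (a, b) \<in> ?C} = (if a \<in> u then A else v)" using sub by auto
    then show "{b. (a, b) \<in> ?C} \<in> W" using v univ by simp
    have "{b. (b, a) \<in> ?C} = (if a \<in> v then A else u)" using \<open>a \<in> A\<close> sub by auto
    then show "{b. (b, a) \<in> ?C} \<in> W" using u univ by simp
  qed
  then have "{b. (b, b) \<in> ?C} \<in> W" using P unfolding pratt_comonoid_def by blast
  moreover have "{b. (b, b) \<in> ?C} = u \<union> v" using sub by auto
  ultimately show ?thesis by simp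
qed

lemma pratt_comonoid_Union:
  assumes P: "pratt_comonoid A W" and "finite F" and "F \<subseteq> W"
  shows "\<Union>F \<in> W"
  using assms(2,3)
proof (induction F rule: finite_induct)
  case empty
  then show ?case using P unfolding pratt_comonoid_def by simp
next
  case (insert u F)
  then show ?case using pratt_comonoid_Un[OF P] by simp
qed

text \<open>The empty intersection is read as \<open>A\<close>, hence the extra factor \<open>A\<close>.\<close>

lemma pratt_comonoid_Inter:
  assumes P: "pratt_comonoid A W" and "finite F" and "F \<subseteq> W"
  shows "A \<inter> \<Inter>F \<in> W"
  using assms(2,3)
proof (induction F rule: finite_induct)
  case empty
  then show ?case using P unfolding pratt_comonoid_def by simp
next
  case (insert u F)
  then have "u \<inter> (A \<inter> \<Inter>F) \<in> W" using pratt_comonoid_Int[OF P] by simp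
  then show ?case by (simp add: Int_left_commute)
qed

lemma T1_comonoid_separates_finite:
  assumes P: "pratt_comonoid A W" and T: "T1_comonoid A W"
    and a: "a \<in> A" and B: "finite B" "B \<subseteq> A" "a \<notin> B"
  shows "\<exists>x\<in>W. a \<in> x \<and> x \<inter> B = {}"
proof -
  have "\<forall>b\<in>B. \<exists>z\<in>W. a \<in> z \<and> b \<notin> z"
    using T a B unfolding T1_comonoid_def by (metis subsetD)
  then obtain z where z: "\<forall>b\<in>B. z b \<in> W \<and> a \<in> z b \<and> b \<notin> z b"
    by (metis bchoice)
  have "A \<inter> \<Inter>(z ` B) \<in> W"
    using pratt_comonoid_Inter[OF P, of "z ` B"] B z by blast
  moreover have "a \<in> A \<inter> \<Inter>(z ` B)" and "(A \<inter> \<Inter>(z ` B)) \<inter> B = {}"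
    using a z by blast+
  ultimately show ?thesis by (meson bexI)
qed

theorem lemma3p1:
  assumes "pratt_comonoid A W"
    and "T1_comonoid A W"
    and "A0 \<subseteq> A" and "finite A0"
    and "y \<subseteq> A0"
  shows "\<exists>x\<in>W. x \<inter> A0 = y"
proof -
  have "\<forall>a\<in>y. \<exists>z\<in>W. a \<in> z \<and> z \<inter> (A0 - {a}) = {}"
    using T1_comonoid_separates_finite[OF assms(1,2)] assms(3-5) by blast
  then obtain z where z: "\<forall>a\<in>y. z a \<in> W \<and> a \<in> z a \<and> z a \<inter> (A0 - {a}) = {}"
    by (metis bchoice)
  have "finite y" using assms(4,5) finite_subset by blast
  then have "\<Union>(z ` y) \<in> W"
    using pratt_comonoid_Union[OF assms(1), of "z ` y"] z by blast
  moreover have "\<Union>(z ` y) \<inter> A0 = y"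
    using z assms(5) by fastforce
  ultimately show ?thesis by (meson bexI)
qed

end
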